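(* Let $(X,d,\mu)$ be an almost-manifold metric measure space. Then every bounded closed subset of $X$ is compact.
   Context: A metric measure space $(X,d,\mu)$: $(X,d)$ is a complete metric space and $\mu$ is a Borel regular measure with $\mu(B_r(x))<\infty$ for all $x\in X$, $r>0$. It is almost-manifold if there is an integer $m\ge3$ such that (i) (local Ahlfors $m$-regularity) for every bounded $U\subset X$ there are $\varepsilon,C>0$ with $C^{-1}r^m\le\mu(B_r(x))\le Cr^m$ for $x\in U$, $r\in(0,\varepsilon)$; (ii) $X=\mathcal R\sqcup\mathcal S$ where $\mathcal R$ is a connected smooth $m$-manifold with a Riemannian metric $g$ such that $d_L=d_g$ and $\mu=\mu_g$ on $\mathcal R$ ($d_L$ the length metric associated to $d$), and $\mathcal S$ is closed with $\mathcal H^{m-2}(\mathcal S)=0$. *)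

theory Defs
  imports "HOL-Analysis.Analysis"
begin

definition smooth_on :: "'n::euclidean_space set \<Rightarrow> ('n \<Rightarrow> 'b::real_normed_vector) \<Rightarrow> bool" where
  "smooth_on S f \<longleftrightarrow> (\<exists>F. f \<in> F \<and> (\<forall>g\<in>F. (\<forall>x\<in>S. g differentiable (at x)) \<and>
       (\<forall>i\<in>Basis. (\<lambda>x. frechet_derivative g (at x) i) \<in> F)))"

definition curve_length :: "(real \<Rightarrow> 'a::metric_space) \<Rightarrow> ennreal" where
  "curve_length \<gamma> = (SUP ts \<in> {ts. sorted ts \<and> set ts \<subseteq> {0..1}}.
      ennreal (\<Sum>i<length ts - 1. dist (\<gamma> (ts ! i)) (\<gamma> (ts ! Suc i))))"

definition length_dist :: "'a::metric_space \<Rightarrow> 'a \<Rightarrow> ennreal" where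
  "length_dist x y = (INF \<gamma> \<in> {\<gamma>. path \<gamma> \<and> pathstart \<gamma> = x \<and> pathfinish \<gamma> = y}. curve_length \<gamma>)"

definition smooth_atlas :: "'a::metric_space set \<Rightarrow> (('a \<Rightarrow> real^'n) \<times> 'a set) set \<Rightarrow> bool" where
  "smooth_atlas R A \<longleftrightarrow>
     (\<forall>(\<phi>,U)\<in>A. open U \<and> U \<subseteq> R \<and> inj_on \<phi> U \<and> continuous_on U \<phi> \<and> open (\<phi> ` U) \<and>
                 continuous_on (\<phi> ` U) (inv_into U \<phi>)) \<and>
     R = \<Union>(snd ` A) \<and>
     (\<forall>(\<phi>1,U1)\<in>A. \<forall>(\<phi>2,U2)\<in>A. smooth_on (\<phi>1 ` (U1 \<inter> U2)) (\<phi>2 \<circ> inv_into U1 \<phi>1))"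

text \<open>Riemannian metric given by its coordinate expressions G phi in each chart.\<close>
definition riemannian_metric :: "(('a \<Rightarrow> real^'n) \<times> 'a set) set \<Rightarrow> (('a \<Rightarrow> real^'n) \<Rightarrow> real^'n \<Rightarrow> real^'n^'n) \<Rightarrow> bool" where
  "riemannian_metric A G \<longleftrightarrow>
     (\<forall>(\<phi>,U)\<in>A. smooth_on (\<phi> ` U) (G \<phi>) \<and>
        (\<forall>p\<in>\<phi> ` U. transpose (G \<phi> p) = G \<phi> p \<and> (\<forall>v. v \<noteq> 0 \<longrightarrow> v \<bullet> (G \<phi> p *v v) > 0))) \<and>
     (\<forall>(\<phi>1,U1)\<in>A. \<forall>(\<phi>2,U2)\<in>A. \<forall>p\<in>\<phi>1 ` (U1 \<inter> U2).
        G \<phi>1 p = transpose (matrix (frechet_derivative (\<phi>2 \<circ> inv_into U1 \<phi>1) (at p)))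
                  ** G \<phi>2 ((\<phi>2 \<circ> inv_into U1 \<phi>1) p)
                  ** matrix (frechet_derivative (\<phi>2 \<circ> inv_into U1 \<phi>1) (at p)))"

definition chart_at :: "(('a \<Rightarrow> real^'n) \<times> 'a set) set \<Rightarrow> 'a \<Rightarrow> ('a \<Rightarrow> real^'n) \<times> 'a set" where
  "chart_at A x = (SOME c. c \<in> A \<and> x \<in> snd c)"

definition admissible_curve :: "'a::metric_space set \<Rightarrow> (('a \<Rightarrow> real^'n) \<times> 'a set) set \<Rightarrow> (real \<Rightarrow> 'a) \<Rightarrow> bool" where
  "admissible_curve R A \<gamma> \<longleftrightarrow> path \<gamma> \<and> path_image \<gamma> \<subseteq> R \<and>
     (\<forall>(\<phi>,U)\<in>A. \<forall>a b. 0 \<le> a \<and> a \<le> b \<and> b \<le> 1 \<and> \<gamma> ` {a..b} \<subseteq> U \<longrightarrow>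
         (\<phi> \<circ> \<gamma>) piecewise_C1_differentiable_on {a..b})"

definition riem_length :: "(('a \<Rightarrow> real^'n) \<times> 'a set) set \<Rightarrow> (('a \<Rightarrow> real^'n) \<Rightarrow> real^'n \<Rightarrow> real^'n^'n) \<Rightarrow> (real \<Rightarrow> 'a) \<Rightarrow> ennreal" where
  "riem_length A G \<gamma> = (\<integral>\<^sup>+ t \<in> {0..1}.
     (let \<phi> = fst (chart_at A (\<gamma> t)); v = vector_derivative (\<phi> \<circ> \<gamma>) (at t)
      in ennreal (sqrt (v \<bullet> (G \<phi> (\<phi> (\<gamma> t)) *v v)))) \<partial>lborel)"

definition riem_dist :: "'a::metric_space set \<Rightarrow> (('a \<Rightarrow> real^'n) \<times> 'a set) set \<Rightarrow> (('a \<Rightarrow> real^'n) \<Rightarrow> real^'n \<Rightarrow> real^'n^'n) \<Rightarrow> 'a \<Rightarrow> 'a \<Rightarrow> ennreal" where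
  "riem_dist R A G x y = (INF \<gamma> \<in> {\<gamma>. admissible_curve R A \<gamma> \<and> pathstart \<gamma> = x \<and> pathfinish \<gamma> = y}.
      riem_length A G \<gamma>)"

definition riem_volume_agrees :: "'a::metric_space measure \<Rightarrow> (('a \<Rightarrow> real^'n) \<times> 'a set) set \<Rightarrow> (('a \<Rightarrow> real^'n) \<Rightarrow> real^'n \<Rightarrow> real^'n^'n) \<Rightarrow> bool" where
  "riem_volume_agrees \<mu> A G \<longleftrightarrow>
     (\<forall>(\<phi>,U)\<in>A. \<forall>B\<in>sets borel. B \<subseteq> U \<longrightarrow>
        emeasure \<mu> B = (\<integral>\<^sup>+ p \<in> \<phi> ` B. ennreal (sqrt (det (G \<phi> p))) \<partial>lborel))"

section \<open>Hausdorff measure (unnormalised; normalisation is irrelevant for null sets)\<close>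

definition hausdorff_pre :: "real \<Rightarrow> real \<Rightarrow> 'a::metric_space set \<Rightarrow> ennreal" where
  "hausdorff_pre s \<delta> E = (INF C \<in> {C :: nat \<Rightarrow> 'a set. E \<subseteq> (\<Union>i. C i) \<and>
        (\<forall>i. bounded (C i) \<and> diameter (C i) \<le> \<delta>)}. (\<Sum>i. ennreal (diameter (C i) powr s)))"

definition hausdorff_measure :: "real \<Rightarrow> 'a::metric_space set \<Rightarrow> ennreal" where
  "hausdorff_measure s E = (SUP \<delta> \<in> {0<..}. hausdorff_pre s \<delta> E)"

text \<open>X is the whole (complete metric) type 'a; the dimension m is CARD('n).\<close>
definition almost_manifold :: "'n::finite itself \<Rightarrow> 'a::complete_space measure \<Rightarrow> bool" where
  "almost_manifold _ \<mu> \<longleftrightarrow>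
     sets \<mu> = sets borel \<and>
     (\<forall>x r. emeasure \<mu> (ball x r) < \<infinity>) \<and>
     CARD('n) \<ge> 3 \<and>
     (\<forall>U. bounded U \<longrightarrow> (\<exists>\<epsilon>>0. \<exists>C>0. \<forall>x\<in>U. \<forall>r. 0 < r \<and> r < \<epsilon> \<longrightarrow>
         ennreal (r ^ CARD('n) / C) \<le> emeasure \<mu> (ball x r) \<and>
         emeasure \<mu> (ball x r) \<le> ennreal (C * r ^ CARD('n)))) \<and>
     (\<exists>R (A :: (('a \<Rightarrow> real^'n) \<times> 'a set) set) G.
         connected R \<and> smooth_atlas R A \<and> riemannian_metric A G \<and>
         (\<forall>x\<in>R. \<forall>y\<in>R. length_dist x y = riem_dist R A G x y) \<and>
         riem_volume_agrees \<mu> A G \<and>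
         closed (UNIV - R) \<and>
         hausdorff_measure (real CARD('n) - 2) (UNIV - R) = 0)"

end

theory Submission
  imports Defs
begin

text \<open>Only the lower Ahlfors bound and the finiteness of the measure of balls matter. Fix a
  bounded K and a small radius r. Points of K that are pairwise 2r apart have disjoint r-balls,
  each of measure at least c r^m, all contained in one large ball of finite measure; so such
  separated sets have bounded cardinality. A maximal one is then a finite 2r-net of K, hence K
  is totally bounded, and a closed subset of a complete space is complete.\<close>

lemma disjoint_family_on_balls_if_separated:
  assumes "pairwise (\<lambda>x y. 2 * r \<le> dist x y) S"
  shows "disjoint_family_on (\<lambda>x. ball x r) S"
  unfolding disjoint_family_on_def
proof (intro ballI impI)
  fix x y assume "x \<in> S" "y \<in> S" "x \<noteq> y"
  with assms have far: "2 * r \<le> dist x y"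
    by (auto simp: pairwise_def)
  show "ball x r \<inter> ball y r = {}"
  proof (rule ccontr)
    assume "ball x r \<inter> ball y r \<noteq> {}"
    then obtain z where "dist x z < r" "dist y z < r"
      by auto
    then have "dist x y < 2 * r"
      using dist_triangle3[of x y z] by (simp add: dist_commute)
    with far show False
      by simp
  qed
qed

lemma card_mult_le_emeasure_if_separated:
  fixes \<mu> :: "'a::metric_space measure"
  assumes sets: "sets \<mu> = sets borel"
    and S: "finite S" "S \<subseteq> ball x0 B"
    and separated: "pairwise (\<lambda>x y. 2 * r \<le> dist x y) S"
    and lower: "\<And>x. x \<in> S \<Longrightarrow> c \<le> emeasure \<mu> (ball x r)"
  shows "of_nat (card S) * c \<le> emeasure \<mu> (ball x0 (B + r))"
proof -
  have "of_nat (card S) * c = (\<Sum>x\<in>S. c)"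
    by simp
  also have "\<dots> \<le> (\<Sum>x\<in>S. emeasure \<mu> (ball x r))"
    by (rule sum_mono) (rule lower)
  also have "\<dots> = emeasure \<mu> (\<Union>x\<in>S. ball x r)"
    by (rule sum_emeasure[OF _ disjoint_family_on_balls_if_separated[OF separated] S(1)])
      (auto simp: sets)
  also have "\<dots> \<le> emeasure \<mu> (ball x0 (B + r))"
  proof (rule emeasure_mono)
    show "(\<Union>x\<in>S. ball x r) \<subseteq> ball x0 (B + r)"
    proof
      fix z assume "z \<in> (\<Union>x\<in>S. ball x r)"
      then obtain x where "x \<in> S" "dist x z < r"
        by auto
      moreover from S(2) \<open>x \<in> S\<close> have "dist x0 x < B"
        by auto
      ultimately show "z \<in> ball x0 (B + r)"
        using dist_triangle[of x0 z x] by auto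
    qed
  qed (simp add: sets)
  finally show ?thesis .
qed

lemma finite_ball_cover_if_separated_card_bounded:
  assumes "d > 0"
    and bounded_card: "\<And>S. finite S \<Longrightarrow> S \<subseteq> K \<Longrightarrow> pairwise (\<lambda>x y. d \<le> dist x y) S \<Longrightarrow> card S \<le> n"
  shows "\<exists>k. finite k \<and> k \<subseteq> K \<and> K \<subseteq> (\<Union>x\<in>k. ball x d)"
proof -
  define separated where "separated S \<longleftrightarrow> finite S \<and> S \<subseteq> K \<and> pairwise (\<lambda>x y. d \<le> dist x y) S"
    for S
  have finite_cards: "finite (card ` Collect separated)"
    by (rule finite_subset[of _ "{..n}"]) (auto simp: separated_def bounded_card)
  have "separated {}"
    by (simp add: separated_def)
  then have "Max (card ` Collect separated) \<in> card ` Collect separated"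
    using finite_cards by (intro Max_in) auto
  then obtain S where S: "separated S" and S_max: "\<And>T. separated T \<Longrightarrow> card T \<le> card S"
    using finite_cards by (metis (mono_tags) Max_ge image_eqI imageE mem_Collect_eq)
  have "K \<subseteq> (\<Union>x\<in>S. ball x d)"
  proof
    fix y assume "y \<in> K"
    show "y \<in> (\<Union>x\<in>S. ball x d)"
    proof (rule ccontr)
      assume "y \<notin> (\<Union>x\<in>S. ball x d)"
      then have far: "\<forall>x\<in>S. d \<le> dist x y"
        by (auto simp: not_less)
      with \<open>d > 0\<close> have "y \<notin> S"
        by force
      from S \<open>y \<in> K\<close> far have "separated (insert y S)"
        by (auto simp: separated_def pairwise_insert dist_commute)
      moreover from S \<open>y \<notin> S\<close> have "card (insert y S) = Suc (card S)"
        by (simp add: separated_def)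
      ultimately show False
        using S_max by fastforce
    qed
  qed
  with S show ?thesis
    unfolding separated_def by blast
qed

lemma totally_bounded_if_lower_ball_measure:
  fixes \<mu> :: "'a::metric_space measure"
  assumes sets: "sets \<mu> = sets borel"
    and finite_balls: "\<And>x r. emeasure \<mu> (ball x r) < \<infinity>"
    and "bounded K" and "\<epsilon> > 0"
    and lower: "\<And>r. 0 < r \<Longrightarrow> r < \<epsilon> \<Longrightarrow> \<exists>c>0. \<forall>x\<in>K. ennreal c \<le> emeasure \<mu> (ball x r)"
    and "e > 0"
  shows "\<exists>k. finite k \<and> k \<subseteq> K \<and> K \<subseteq> (\<Union>x\<in>k. ball x e)"
proof -
  obtain x0 B where K: "K \<subseteq> ball x0 B"
    using \<open>bounded K\<close> bounded_subset_ballD by blast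
  define d where "d = min e \<epsilon>"
  define r where "r = d / 2"
  have "d > 0" "r > 0" "r < \<epsilon>"
    using \<open>e > 0\<close> \<open>\<epsilon> > 0\<close> by (auto simp: d_def r_def)
  then obtain c where "c > 0" and c: "\<And>x. x \<in> K \<Longrightarrow> ennreal c \<le> emeasure \<mu> (ball x r)"
    using lower by blast
  define M where "M = measure \<mu> (ball x0 (B + r))"
  have card_bound: "card S \<le> nat \<lceil>M / c\<rceil>"
    if S: "finite S" "S \<subseteq> K" and separated: "pairwise (\<lambda>x y. d \<le> dist x y) S" for S
  proof -
    have "ennreal (real (card S) * c) = of_nat (card S) * ennreal c"
      using \<open>c > 0\<close> by (simp add: ennreal_mult ennreal_of_nat_eq_real_of_nat)
    also have "\<dots> \<le> emeasure \<mu> (ball x0 (B + r))"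
    proof (rule card_mult_le_emeasure_if_separated[OF sets \<open>finite S\<close>])
      show "S \<subseteq> ball x0 B"
        using S K by blast
      show "pairwise (\<lambda>x y. 2 * r \<le> dist x y) S"
        using separated by (simp add: r_def)
    qed (use S c in blast)
    also have "\<dots> = ennreal M"
      unfolding M_def using finite_balls[of x0 "B + r"] by (intro emeasure_eq_ennreal_measure) simp
    finally have "real (card S) * c \<le> M"
      by (simp add: M_def)
    with \<open>c > 0\<close> have "real (card S) \<le> M / c"
      by (simp add: field_simps)
    then show ?thesis
      by linarith
  qed
  obtain k where "finite k" "k \<subseteq> K" "K \<subseteq> (\<Union>x\<in>k. ball x d)"
    using finite_ball_cover_if_separated_card_bounded[OF \<open>d > 0\<close> card_bound] by meson
  moreover have "(\<Union>x\<in>k. ball x d) \<subseteq> (\<Union>x\<in>k. ball x e)"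
    by (auto simp: d_def)
  ultimately show ?thesis
    by (meson order_trans)
qed

theorem lemma2p3:
  fixes \<mu> :: "'a::complete_space measure"
  assumes "almost_manifold TYPE('n::finite) \<mu>"
  shows "\<forall>K :: 'a set. bounded K \<and> closed K \<longrightarrow> compact K"
proof (intro allI impI)
  fix K :: "'a set" assume K: "bounded K \<and> closed K"
  have sets: "sets \<mu> = sets borel" and finite_balls: "\<And>x r. emeasure \<mu> (ball x r) < \<infinity>"
    and ahlfors: "\<And>U. bounded U \<Longrightarrow> \<exists>\<epsilon>>0. \<exists>C>0. \<forall>x\<in>U. \<forall>r. 0 < r \<and> r < \<epsilon> \<longrightarrow>
         ennreal (r ^ CARD('n) / C) \<le> emeasure \<mu> (ball x r)"
    using assms unfolding almost_manifold_def by meson+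
  obtain \<epsilon> C where "\<epsilon> > 0" "C > 0" and lower_ahlfors:
    "\<And>x r. x \<in> K \<Longrightarrow> 0 < r \<Longrightarrow> r < \<epsilon> \<Longrightarrow> ennreal (r ^ CARD('n) / C) \<le> emeasure \<mu> (ball x r)"
    using ahlfors[of K] K by blast
  have lower: "\<exists>c>0. \<forall>x\<in>K. ennreal c \<le> emeasure \<mu> (ball x r)" if "0 < r" "r < \<epsilon>" for r
    using that \<open>C > 0\<close> lower_ahlfors by (intro exI[of _ "r ^ CARD('n) / C"]) auto
  have "\<exists>k. finite k \<and> K \<subseteq> (\<Union>x\<in>k. ball x e)" if "e > 0" for e
    using totally_bounded_if_lower_ball_measure[OF sets finite_balls _ \<open>\<epsilon> > 0\<close> lower that] K
    by blast
  moreover have "complete K"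
    using K complete_eq_closed by blast
  ultimately show "compact K"
    unfolding compact_eq_totally_bounded by blast
qed

end
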